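(* Let $p>1$ and let $\Omega\subset\mathbb{R}^n$ be a smooth bounded open set with slab diameter at most $d$. Then the first Dirichlet eigenvalue of the $p$-Laplacian on $\Omega$ satisfies \[ \lambda_{1,p}(\Omega)\geq \left(\frac{p}{p-1}\right)^{p-1}\left(\frac{2}{d}\right)^{p}. \]
   Context: The slab diameter of a bounded open set $\Omega\subset\mathbb{R}^n$ is the infimum of the distances between two parallel hyperplanes such that $\Omega$ is contained in the region between them. The first eigenvalue is $\lambda_{1,p}(\Omega)=\inf\left\{\frac{\int_\Omega|\nabla v|^p\,dx}{\int_\Omega |v|^p\,dx} : v\in W^{1,p}_0(\Omega),\ v\neq 0\right\}$. *)

theory Defs
  imports "HOL-Analysis.Analysis"
begin

fun Ck :: "nat \<Rightarrow> ('a::euclidean_space \<Rightarrow> real) \<Rightarrow> bool" where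
  "Ck 0 f = continuous_on UNIV f"
| "Ck (Suc k) f = (\<exists>g. (\<forall>x. (f has_derivative (\<lambda>h. g x \<bullet> h)) (at x)) \<and>
                        (\<forall>i\<in>Basis. Ck k (\<lambda>x. g x \<bullet> i)))"

definition smooth_fun :: "('a::euclidean_space \<Rightarrow> real) \<Rightarrow> bool" where
  "smooth_fun f \<longleftrightarrow> (\<forall>k. Ck k f)"

definition smooth_domain :: "'a::euclidean_space set \<Rightarrow> bool" where
  "smooth_domain \<Omega> \<longleftrightarrow> (\<exists>\<rho>. smooth_fun \<rho> \<and> \<Omega> = {x. \<rho> x < 0} \<and>
      (\<forall>x. \<rho> x = 0 \<longrightarrow> (\<exists>D. (\<rho> has_derivative D) (at x) \<and> D \<noteq> (\<lambda>h. 0))))"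

definition slab_diameter :: "'a::euclidean_space set \<Rightarrow> real" where
  "slab_diameter \<Omega> = Inf {b - a | u a b. norm u = 1 \<and> \<Omega> \<subseteq> {x. a \<le> u \<bullet> x \<and> u \<bullet> x \<le> b}}"

definition test_fun :: "'a::euclidean_space set \<Rightarrow> ('a \<Rightarrow> real) \<Rightarrow> ('a \<Rightarrow> 'a) \<Rightarrow> bool" where
  "test_fun \<Omega> \<phi> G \<longleftrightarrow> smooth_fun \<phi> \<and> (\<forall>x. (\<phi> has_derivative (\<lambda>h. G x \<bullet> h)) (at x)) \<and>
      compact (closure {x. \<phi> x \<noteq> 0}) \<and> closure {x. \<phi> x \<noteq> 0} \<subseteq> \<Omega>"

(* W^{1,p}_0(\<Omega>): completion of C_c^\<infinity>(\<Omega>) in the W^{1,p} norm.  A pair (v, g) belongs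
   to it iff v, g are measurable and some sequence of test functions \<phi>_k converges to v
   in L^p(\<Omega>) while \<nabla>\<phi>_k converges to g in L^p(\<Omega>); g is then the weak gradient of v. *)
definition W0 :: "real \<Rightarrow> 'a::euclidean_space set \<Rightarrow> (('a \<Rightarrow> real) \<times> ('a \<Rightarrow> 'a)) set" where
  "W0 p \<Omega> = {(v, g). v \<in> borel_measurable lebesgue \<and> g \<in> borel_measurable lebesgue \<and>
      (\<exists>\<phi> G. (\<forall>k. test_fun \<Omega> (\<phi> k) (G k)) \<and>
         ((\<lambda>k. \<integral>\<^sup>+ x\<in>\<Omega>. ennreal (\<bar>\<phi> k x - v x\<bar> powr p) \<partial>lebesgue) \<longlonglongrightarrow> 0) \<and>
         ((\<lambda>k. \<integral>\<^sup>+ x\<in>\<Omega>. ennreal (norm (G k x - g x) powr p) \<partial>lebesgue) \<longlonglongrightarrow> 0))}"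

definition lambda1 :: "real \<Rightarrow> 'a::euclidean_space set \<Rightarrow> ennreal" where
  "lambda1 p \<Omega> = Inf {(\<integral>\<^sup>+ x\<in>\<Omega>. ennreal (norm (g x) powr p) \<partial>lebesgue) /
                        (\<integral>\<^sup>+ x\<in>\<Omega>. ennreal (\<bar>v x\<bar> powr p) \<partial>lebesgue)
                      | v g. (v, g) \<in> W0 p \<Omega> \<and> (\<integral>\<^sup>+ x\<in>\<Omega>. ennreal (\<bar>v x\<bar> powr p) \<partial>lebesgue) \<noteq> 0}"

end

theory Submission
  imports Defs
begin

(* Fix a unit vector u and a slab a <= u.x <= b containing Omega, with centre m and half-width
   R = (b - a)/2.  With q = p/(p-1) and K = q^(p-1), the barrier
     f(t) = K t (R^q - |t|^q)^(1-p)    on (-R, R)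
   satisfies the Riccati inequality f' - (p-1)|f|^q = K (R^q - |t|^q)^(1-p) >= K R^(-p).
   For a test function phi, the vector field f(u.x - m) |phi|^p u has zero total divergence;
   Young's inequality absorbs the cross term p f |phi|^(p-2) phi (grad phi . u) into
   |grad phi|^p + (p-1) |f|^q |phi|^p, which leaves K R^(-p) int |phi|^p <= int |grad phi|^p.
   The bound passes to W^{1,p}_0 by approximation, and to the slab diameter by continuity
   in the width of the slab. *)


lemma has_real_derivative_abs_powr:
  fixes q t :: real
  assumes q: "q > 1"
  shows "((\<lambda>t. \<bar>t\<bar> powr q) has_real_derivative q * \<bar>t\<bar> powr (q - 1) * sgn t) (at t)"
proof (cases "t = 0")
  case True
  have "((\<lambda>y::real. \<bar>y\<bar> powr (q - 1)) \<longlongrightarrow> 0) (at 0)"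
    using q by (auto intro!: tendsto_eq_intros)
  moreover have "\<bar>y\<bar> powr (q - 1) = \<bar>(\<bar>y\<bar> powr q - \<bar>0\<bar> powr q) / (y - 0)\<bar>" if "y \<noteq> 0" for y :: real
    using that q by (simp add: abs_divide powr_diff)
  ultimately have "((\<lambda>y. \<bar>(\<bar>y\<bar> powr q - \<bar>0\<bar> powr q) / (y - 0)\<bar>) \<longlongrightarrow> 0) (at (0::real))"
    by (simp add: Lim_transform_eventually eventually_at_filter)
  then show ?thesis
    using True q by (simp add: has_field_derivative_iff tendsto_rabs_zero_cancel)
next
  case False
  have "sgn t * t = \<bar>t\<bar>" by (simp add: sgn_if)
  with False
  have "((\<lambda>s. (sgn t * s) powr q) has_real_derivative q * \<bar>t\<bar> powr (q - 1) * sgn t) (at t)"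
    by (auto intro!: derivative_eq_intros)
  then show ?thesis
    by (rule has_field_derivative_transform_within_open[where S = "ball t \<bar>t\<bar>"])
      (use False in \<open>auto simp: dist_real_def sgn_if abs_if split: if_splits\<close>)
qed

lemma Youngs_inequality_conjugate:
  fixes p a b :: real
  assumes "p > 1" "a \<ge> 0" "b \<ge> 0"
  shows "p * a * b \<le> a powr p + (p - 1) * b powr (p / (p - 1))"
proof -
  have "a * b \<le> a powr p / p + b powr (p / (p - 1)) / (p / (p - 1))"
    using assms by (intro Youngs_inequality) (auto simp: field_simps)
  then show ?thesis
    using assms by (simp add: field_simps)
qed

lemma add_powr_le_weighted:
  fixes p l x y :: real
  assumes "p \<ge> 1" "0 < l" "l < 1" "x \<ge> 0" "y \<ge> 0"
  shows "(x + y) powr p \<le> l powr (1 - p) * x powr p + (1 - l) powr (1 - p) * y powr p"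
proof (cases "x > 0 \<and> y > 0")
  case True
  have "(l * (x / l) + (1 - l) * (y / (1 - l))) powr p
          \<le> l * (x / l) powr p + (1 - l) * (y / (1 - l)) powr p"
    using convex_onD[OF powr_convex[OF assms(1)], of "1 - l" "x / l" "y / (1 - l)"] True assms
    by auto
  then show ?thesis
    using assms by (simp add: powr_divide powr_diff)
next
  case False
  have "1 \<le> l powr (1 - p)" "1 \<le> (1 - l) powr (1 - p)"
    using powr_mono2'[of "1 - p" l 1] powr_mono2'[of "1 - p" "1 - l" 1] assms by auto
  then have "x powr p \<le> l powr (1 - p) * x powr p" "y powr p \<le> (1 - l) powr (1 - p) * y powr p"
    by (simp_all add: mult_le_cancel_right1)
  then show ?thesis
    using False assms by auto
qed

lemma continuous_on_abs_powr_sgn: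
  fixes e :: real
  assumes "e > 0"
  shows "continuous_on UNIV (\<lambda>t::real. \<bar>t\<bar> powr e * sgn t)"
proof -
  have "continuous_on {0..} (\<lambda>t::real. \<bar>t\<bar> powr e * sgn t)"
  proof (rule continuous_on_cong[THEN iffD1, rotated 2])
    show "continuous_on {0..} (\<lambda>t::real. t powr e)"
      using assms by (intro continuous_on_powr' continuous_intros) auto
  qed (auto simp: sgn_if)
  moreover have "continuous_on {..0} (\<lambda>t::real. \<bar>t\<bar> powr e * sgn t)"
  proof (rule continuous_on_cong[THEN iffD1, rotated 2])
    show "continuous_on {..0} (\<lambda>t::real. - ((- t) powr e))"
      using assms by (intro continuous_on_powr' continuous_intros) auto
  qed (auto simp: sgn_if)
  ultimately have "continuous_on ({..0} \<union> {0..}) (\<lambda>t::real. \<bar>t\<bar> powr e * sgn t)"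
    by (intro continuous_on_closed_Un) auto
  moreover have "{..0} \<union> {0..} = (UNIV :: real set)"
    by auto
  ultimately show ?thesis
    by simp
qed


section \<open>The one-dimensional barrier\<close>

definition barrier :: "real \<Rightarrow> real \<Rightarrow> real \<Rightarrow> real" where
  "barrier p R t = (p / (p - 1)) powr (p - 1) * t *
     (R powr (p / (p - 1)) - \<bar>t\<bar> powr (p / (p - 1))) powr (1 - p)"

definition barrier_deriv :: "real \<Rightarrow> real \<Rightarrow> real \<Rightarrow> real" where
  "barrier_deriv p R t = (p / (p - 1)) powr (p - 1) *
     ((R powr (p / (p - 1)) - \<bar>t\<bar> powr (p / (p - 1))) powr (1 - p) +
      p * \<bar>t\<bar> powr (p / (p - 1)) * (R powr (p / (p - 1)) - \<bar>t\<bar> powr (p / (p - 1))) powr (- p))"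

lemma barrier_has_real_derivative:
  fixes p R t :: real
  assumes p: "p > 1" and t: "\<bar>t\<bar> < R"
  shows "(barrier p R has_real_derivative barrier_deriv p R t) (at t)"
proof -
  define q where "q = p / (p - 1)"
  define K where "K = q powr (p - 1)"
  define W where "W s = R powr q - \<bar>s\<bar> powr q" for s
  have q: "q > 1" and qp: "(p - 1) * q = p"
    using p by (simp_all add: q_def field_simps)
  have W_pos: "W t > 0"
    using t q by (simp add: W_def powr_less_mono2)
  have t_powr: "t * sgn t * \<bar>t\<bar> powr (q - 1) = \<bar>t\<bar> powr q"
  proof (cases "t = 0")
    case False
    have "t * sgn t = \<bar>t\<bar>"
      by (simp add: sgn_if)
    moreover have "\<bar>t\<bar> * \<bar>t\<bar> powr (q - 1) = \<bar>t\<bar> powr q"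
      using powr_mult_base[of "\<bar>t\<bar>" "q - 1"] False by simp
    ultimately show ?thesis
      by (simp only:)
  qed (use q in simp)
  have barrier_eq: "barrier p R = (\<lambda>s. K * s * W s powr (1 - p))"
    by (simp add: fun_eq_iff barrier_def q_def K_def W_def)
  have deriv_eq: "barrier_deriv p R t = K * W t powr (1 - p) + K * p * \<bar>t\<bar> powr q * W t powr (- p)"
    by (simp add: barrier_deriv_def q_def K_def W_def algebra_simps)
  have "(W has_real_derivative - (q * \<bar>t\<bar> powr (q - 1) * sgn t)) (at t)"
    unfolding W_def by (rule derivative_eq_intros has_real_derivative_abs_powr[OF q] | simp)+
  then have "((\<lambda>s. K * s * W s powr (1 - p)) has_real_derivative
      K * W t powr (1 - p)
        + K * t * ((1 - p) * W t powr (1 - p - 1) * - (q * \<bar>t\<bar> powr (q - 1) * sgn t)))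
      (at t)"
    using W_pos by (auto intro!: derivative_eq_intros)
  also have "K * t * ((1 - p) * W t powr (1 - p - 1) * - (q * \<bar>t\<bar> powr (q - 1) * sgn t))
      = K * ((p - 1) * q) * (t * sgn t * \<bar>t\<bar> powr (q - 1)) * W t powr (- p)"
    by (simp add: algebra_simps)
  also have "\<dots> = K * p * \<bar>t\<bar> powr q * W t powr (- p)"
    by (simp only: qp t_powr)
  finally show ?thesis
    unfolding barrier_eq deriv_eq .
qed

lemma barrier_riccati:
  fixes p R t :: real
  assumes p: "p > 1" and t: "\<bar>t\<bar> < R"
  shows "(p / (p - 1)) powr (p - 1) * R powr (- p)
           \<le> barrier_deriv p R t - (p - 1) * \<bar>barrier p R t\<bar> powr (p / (p - 1))"
proof -
  define q where "q = p / (p - 1)"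
  define K where "K = q powr (p - 1)"
  define W where "W = R powr q - \<bar>t\<bar> powr q"
  have q: "q > 1" and qp: "(p - 1) * q = p" "q * (1 - p) = - p"
    using p by (simp_all add: q_def field_simps)
  have W: "W > 0"
    using t q by (simp add: W_def powr_less_mono2)
  have K: "K > 0"
    using q by (simp add: K_def)
  have "q powr p = q powr (p - 1) * q powr 1"
    using powr_add[of q "p - 1" 1] by simp
  then have Kq: "K powr q = K * q"
    using q qp by (simp add: K_def powr_powr)
  have "\<bar>barrier p R t\<bar> powr q = K powr q * \<bar>t\<bar> powr q * W powr (- p)"
    using K W by (simp add: barrier_def q_def[symmetric] K_def[symmetric] W_def[symmetric]
        abs_mult powr_mult powr_powr qp mult.commute)
  then have "(p - 1) * \<bar>barrier p R t\<bar> powr q = K * ((p - 1) * q) * \<bar>t\<bar> powr q * W powr (- p)"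
    by (simp add: Kq)
  also have "\<dots> = K * p * \<bar>t\<bar> powr q * W powr (- p)"
    by (simp only: qp)
  finally have "barrier_deriv p R t - (p - 1) * \<bar>barrier p R t\<bar> powr q = K * W powr (1 - p)"
    by (simp add: barrier_deriv_def q_def[symmetric] K_def[symmetric] W_def[symmetric]
        algebra_simps)
  moreover have "(R powr q) powr (1 - p) \<le> W powr (1 - p)"
    using W p by (intro powr_mono2') (auto simp: W_def)
  then have "R powr (- p) \<le> W powr (1 - p)"
    using qp by (simp add: powr_powr)
  ultimately show ?thesis
    using K by (simp add: q_def K_def)
qed

lemma continuous_on_barrier:
  fixes p R :: real
  assumes "p > 1"
  shows "continuous_on {-R<..<R} (barrier p R)"
  by (intro continuous_at_imp_continuous_on ballI
      DERIV_isCont[OF barrier_has_real_derivative[OF assms]]) auto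

lemma continuous_on_barrier_deriv:
  fixes p R :: real
  assumes p: "p > 1"
  shows "continuous_on {-R<..<R} (barrier_deriv p R)"
proof -
  define q where "q = p / (p - 1)"
  have q: "q > 0"
    using p by (simp add: q_def)
  have abs_powr: "continuous_on {-R<..<R} (\<lambda>t::real. \<bar>t\<bar> powr q)"
    using q by (intro continuous_on_powr' continuous_intros) auto
  have "R powr q - \<bar>t\<bar> powr q \<noteq> 0" if "t \<in> {-R<..<R}" for t
    using that q powr_less_mono2[of q "\<bar>t\<bar>" R] by (auto simp: abs_less_iff)
  then have W_powr: "continuous_on {-R<..<R} (\<lambda>t. (R powr q - \<bar>t\<bar> powr q) powr e)" for e
    by (intro continuous_on_powr continuous_intros abs_powr) auto
  show ?thesis
    unfolding barrier_deriv_def q_def[symmetric]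
    by (intro continuous_on_add continuous_on_mult continuous_on_const abs_powr W_powr)
qed

lemma barrier_young_inequality:
  fixes p R t y z g :: real
  assumes p: "p > 1" and t: "\<bar>t\<bar> < R" and z: "\<bar>z\<bar> \<le> g"
  shows "(p / (p - 1)) powr (p - 1) * R powr (- p) * \<bar>y\<bar> powr p
           \<le> g powr p + barrier_deriv p R t * \<bar>y\<bar> powr p
              + barrier p R t * (p * \<bar>y\<bar> powr (p - 1) * sgn y * z)"
proof -
  define q where "q = p / (p - 1)"
  define Y where "Y = \<bar>barrier p R t\<bar> * \<bar>y\<bar> powr (p - 1)"
  have qp: "(p - 1) * q = p"
    using p by (simp add: q_def)
  have "Y powr q = \<bar>barrier p R t\<bar> powr q * \<bar>y\<bar> powr p"
    by (simp add: Y_def powr_mult powr_powr qp)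
  then have Young: "p * g * Y \<le> g powr p + (p - 1) * (\<bar>barrier p R t\<bar> powr q * \<bar>y\<bar> powr p)"
    using Youngs_inequality_conjugate[OF p, of g Y] z by (simp add: Y_def q_def)
  have "\<bar>barrier p R t * (p * \<bar>y\<bar> powr (p - 1) * sgn y * z)\<bar> \<le> p * g * Y"
    using mult_left_mono[OF z, of "p * \<bar>barrier p R t\<bar> * \<bar>y\<bar> powr (p - 1)"] p
    by (cases "y = 0") (auto simp: Y_def abs_mult algebra_simps)
  then have cross: "- (p * g * Y) \<le> barrier p R t * (p * \<bar>y\<bar> powr (p - 1) * sgn y * z)"
    by linarith
  have "((p / (p - 1)) powr (p - 1) * R powr (- p) + (p - 1) * \<bar>barrier p R t\<bar> powr q)
          * \<bar>y\<bar> powr p \<le> barrier_deriv p R t * \<bar>y\<bar> powr p"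
    using barrier_riccati[OF p t] by (intro mult_right_mono) (auto simp: q_def)
  then have riccati: "(p / (p - 1)) powr (p - 1) * R powr (- p) * \<bar>y\<bar> powr p
      + (p - 1) * (\<bar>barrier p R t\<bar> powr q * \<bar>y\<bar> powr p) \<le> barrier_deriv p R t * \<bar>y\<bar> powr p"
    by (simp add: algebra_simps)
  from Young cross riccati show ?thesis
    by linarith
qed


section \<open>The inequality for test functions\<close>

lemma borel_measurable_lebesgue_continuous:
  fixes f :: "'a::euclidean_space \<Rightarrow> 'b::euclidean_space"
  assumes "continuous_on UNIV f"
  shows "f \<in> borel_measurable lebesgue"
proof -
  have "(\<lambda>x. x) \<in> borel_measurable (lebesgue :: 'a measure)"
    by (rule measurable_completion) simp
  then show ?thesis
    using borel_measurable_continuous_on[OF assms] by blast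
qed

lemma has_derivative_locally_zero:
  assumes "(f has_derivative D) (at x)" "open T" "x \<in> T" "\<And>y. y \<in> T \<Longrightarrow> f y = 0"
  shows "D = (\<lambda>h. 0)"
proof -
  have "(f has_derivative (\<lambda>h. 0)) (at x)"
    by (rule has_derivative_transform_within_open[OF has_derivative_const assms(2,3)])
      (use assms(4) in simp)
  with assms(1) show ?thesis
    by (rule has_derivative_unique)
qed

lemma continuous_on_UNIV_zero_outside:
  assumes "continuous_on U f" "open U" "closed S" "S \<subseteq> U" "\<And>x. x \<notin> S \<Longrightarrow> f x = 0"
  shows "continuous_on UNIV f"
proof -
  have "continuous_on (- S) f"
    using continuous_on_const[of "- S" 0]
    by (rule continuous_on_cong[THEN iffD1, rotated 2]) (use assms(5) in auto)
  then have "continuous_on (U \<union> - S) f"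
    using assms by (intro continuous_on_open_Un) auto
  moreover have "U \<union> - S = UNIV"
    using assms(4) by auto
  ultimately show ?thesis
    by simp
qed

lemma test_funD:
  fixes \<phi> :: "'a::euclidean_space \<Rightarrow> real"
  assumes "test_fun \<Omega> \<phi> G"
  defines "S \<equiv> closure {x. \<phi> x \<noteq> 0}"
  shows "\<And>x. (\<phi> has_derivative (\<lambda>h. G x \<bullet> h)) (at x)"
    and "compact S" "S \<subseteq> \<Omega>"
    and "\<And>x. x \<notin> S \<Longrightarrow> \<phi> x = 0" "\<And>x. x \<notin> S \<Longrightarrow> G x = 0"
    and "continuous_on UNIV \<phi>" "continuous_on UNIV G"
proof -
  show deriv: "(\<phi> has_derivative (\<lambda>h. G x \<bullet> h)) (at x)" for x
    using assms by (simp add: test_fun_def)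
  show "compact S" "S \<subseteq> \<Omega>"
    using assms by (simp_all add: test_fun_def)
  show zero: "\<phi> x = 0" if "x \<notin> S" for x
    using that unfolding S_def by (meson closure_subset mem_Collect_eq subsetD)
  show "G x = 0" if "x \<notin> S" for x
  proof -
    have "open (- S)"
      by (simp add: S_def open_Compl)
    then have "(\<lambda>h. G x \<bullet> h) = (\<lambda>h. 0)"
      by (rule has_derivative_locally_zero[OF deriv]) (use that zero in auto)
    then have "G x \<bullet> G x = 0"
      by metis
    then show ?thesis
      by simp
  qed
  show "continuous_on UNIV \<phi>"
    by (rule continuous_at_imp_continuous_on) (use deriv has_derivative_continuous in blast)
  have "Ck (Suc 0) \<phi>"
    using assms by (simp add: test_fun_def smooth_fun_def del: Ck.simps)
  then obtain g where g: "\<And>x. (\<phi> has_derivative (\<lambda>h. g x \<bullet> h)) (at x)"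
    and g_cont: "\<And>i. i \<in> Basis \<Longrightarrow> continuous_on UNIV (\<lambda>x. g x \<bullet> i)"
    unfolding Ck.simps by blast
  have "G = g"
  proof
    fix x
    have "(\<lambda>h. G x \<bullet> h) = (\<lambda>h. g x \<bullet> h)"
      using deriv g by (rule has_derivative_unique)
    then have "G x \<bullet> (G x - g x) = g x \<bullet> (G x - g x)"
      by metis
    then have "(G x - g x) \<bullet> (G x - g x) = 0"
      by (simp add: inner_diff_left)
    then show "G x = g x"
      by simp
  qed
  have "continuous_on UNIV (\<lambda>x. \<Sum>i\<in>Basis. (g x \<bullet> i) *\<^sub>R i)"
    by (intro continuous_intros g_cont)
  then show "continuous_on UNIV G"
    unfolding \<open>G = g\<close> euclidean_representation .
qed

lemma integrable_on_UNIV_compact_support: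
  fixes f :: "'a::euclidean_space \<Rightarrow> 'b::banach"
  assumes "continuous_on UNIV f" "compact S" "\<And>x. x \<notin> S \<Longrightarrow> f x = 0"
  shows "f integrable_on UNIV"
proof -
  obtain c where "S \<subseteq> cbox (- c) c"
    using bounded_subset_cbox_symmetric[OF compact_imp_bounded[OF assms(2)]] .
  moreover have "f integrable_on cbox (- c) c"
    using assms(1) continuous_on_subset integrable_continuous by blast
  ultimately show ?thesis
    using assms(3) by (blast intro: integrable_on_superset)
qed

lemma nn_set_integral_eq_integral:
  fixes k :: "'a::euclidean_space \<Rightarrow> real"
  assumes "k integrable_on UNIV" "\<And>x. k x \<ge> 0" "\<And>x. x \<notin> \<Omega> \<Longrightarrow> k x = 0"
  shows "(\<integral>\<^sup>+ x\<in>\<Omega>. ennreal (k x) \<partial>lebesgue) = ennreal (integral UNIV k)"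
proof -
  have "(\<integral>\<^sup>+ x\<in>\<Omega>. ennreal (k x) \<partial>lebesgue) = (\<integral>\<^sup>+ x. ennreal (k x) \<partial>lebesgue)"
    using assms(3) by (intro nn_integral_cong) (auto simp: indicator_def)
  also have "\<dots> = ennreal (integral UNIV k)"
    using has_integral_iff_nn_integral_lebesgue[of k] assms(1,2) by blast
  finally show ?thesis .
qed

lemma integral_cbox_shift_eq_integral_UNIV:
  fixes F :: "'a::euclidean_space \<Rightarrow> 'b::banach"
  assumes zero: "\<And>x. x \<notin> S \<Longrightarrow> F x = 0" and shift: "\<And>x. x \<in> S \<Longrightarrow> x - c \<in> cbox a b"
  shows "integral (cbox a b) (\<lambda>x. F (x + c)) = integral UNIV F"
proof -
  have "integral (cbox a b) (\<lambda>x. F (x + c)) = integral (cbox (a + c) (b + c)) F"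
    using integral_shift_cbox[where f = F and a = "a + c" and b = "b + c" and c = c] by simp
  also have "(\<lambda>x. if x \<in> cbox (a + c) (b + c) then F x else 0) = F"
  proof
    fix x
    have "x \<in> cbox (a + c) (b + c)" if "x \<in> S"
      using shift[OF that] by (auto simp: mem_box inner_diff_left inner_add_left)
    then show "(if x \<in> cbox (a + c) (b + c) then F x else 0) = F x"
      using zero by auto
  qed
  then have "integral (cbox (a + c) (b + c)) F = integral UNIV F"
    by (metis integral_restrict_UNIV)
  finally show ?thesis .
qed

lemma has_field_derivative_integral_translate:
  fixes F :: "'a::euclidean_space \<Rightarrow> real"
  assumes deriv: "\<And>x. (F has_derivative DF x) (at x)" and cont: "continuous_on UNIV (\<lambda>x. DF x u)"
  shows "((\<lambda>s. integral (cbox a b) (\<lambda>x. F (x + s *\<^sub>R u))) has_field_derivative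
           integral (cbox a b) (\<lambda>x. DF x u)) (at 0)"
proof -
  have F_cont: "continuous_on UNIV F"
    by (rule continuous_at_imp_continuous_on) (use deriv has_derivative_continuous in blast)
  have "((\<lambda>s. integral (cbox a b) (\<lambda>x. F (x + s *\<^sub>R u))) has_field_derivative
          integral (cbox a b) (\<lambda>x. DF (x + 0 *\<^sub>R u) u)) (at 0 within UNIV)"
  proof (rule leibniz_rule_field_derivative)
    show "((\<lambda>s. F (x + s *\<^sub>R u)) has_field_derivative DF (x + s *\<^sub>R u) u) (at s within UNIV)"
      for x s
    proof -
      have chain: "((\<lambda>s. F (x + s *\<^sub>R u)) has_derivative (\<lambda>h. DF (x + s *\<^sub>R u) (h *\<^sub>R u))) (at s)"
        by (rule has_derivative_compose[OF _ deriv]) (auto intro!: derivative_eq_intros)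
      have "DF (x + s *\<^sub>R u) (h *\<^sub>R u) = h * DF (x + s *\<^sub>R u) u" for h
        using has_derivative_linear[OF deriv] by (simp add: linear_scale)
      then have "(\<lambda>h. DF (x + s *\<^sub>R u) (h *\<^sub>R u)) = (*) (DF (x + s *\<^sub>R u) u)"
        by (simp add: fun_eq_iff mult.commute)
      with chain show ?thesis
        by (simp add: has_field_derivative_def)
    qed
    show "(\<lambda>x. F (x + s *\<^sub>R u)) integrable_on cbox a b" for s
      by (intro integrable_continuous continuous_on_compose2[OF F_cont] continuous_intros) auto
    have "continuous_on (UNIV \<times> cbox a b) (\<lambda>z. DF (snd z + fst z *\<^sub>R u) u)"
      by (rule continuous_on_compose2[OF cont]) (auto intro!: continuous_intros)
    then show "continuous_on (UNIV \<times> cbox a b) (\<lambda>(s, x). DF (x + s *\<^sub>R u) u)"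
      by (simp add: case_prod_beta)
  qed auto
  then show ?thesis
    by simp
qed

lemma has_integral_directional_derivative_eq_0:
  fixes F :: "'a::euclidean_space \<Rightarrow> real"
  assumes deriv: "\<And>x. (F has_derivative DF x) (at x)"
    and cont: "continuous_on UNIV (\<lambda>x. DF x u)"
    and S: "compact S" and zero: "\<And>x. x \<notin> S \<Longrightarrow> F x = 0"
  shows "((\<lambda>x. DF x u) has_integral 0) UNIV"
proof -
  have DF_zero: "DF x u = 0" if "x \<notin> S" for x
  proof -
    have "open (- S)"
      using S by (simp add: compact_imp_closed open_Compl)
    then have "DF x = (\<lambda>h. 0)"
      by (rule has_derivative_locally_zero[OF deriv]) (use that zero in auto)
    then show ?thesis
      by simp
  qed
  obtain M where M: "\<And>x. x \<in> S \<Longrightarrow> norm x \<le> M"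
    using compact_imp_bounded[OF S] bounded_iff by blast
  obtain c :: 'a where c: "cball 0 (M + norm u) \<subseteq> cbox (- c) c"
    using bounded_subset_cbox_symmetric[OF bounded_cball] by blast
  have shift: "x + s *\<^sub>R u \<in> cbox (- c) c" if "x \<in> S" "\<bar>s\<bar> \<le> 1" for x s
  proof -
    have "norm (x + s *\<^sub>R u) \<le> M + norm u"
      using M[OF that(1)] norm_triangle_ineq[of x "s *\<^sub>R u"]
        mult_right_mono[OF that(2) norm_ge_zero, of u]
      by simp
    then show ?thesis
      using c by auto
  qed
  \<comment> \<open>By translation invariance the integral of \<open>F (x + s u)\<close> over a large box does not depend
      on \<open>s\<close>, so its derivative at \<open>s = 0\<close>, the integral of \<open>DF x u\<close>, vanishes.\<close>
  have "((\<lambda>s. integral (cbox (- c) c) (\<lambda>x. F (x + s *\<^sub>R u))) has_field_derivative 0) (at 0)"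
  proof (rule has_field_derivative_transform_within_open[OF DERIV_const, of "ball 0 1"])
    show "integral UNIV F = integral (cbox (- c) c) (\<lambda>x. F (x + s *\<^sub>R u))" if "s \<in> ball 0 1" for s
      using shift[of _ "- s"] that
      by (intro integral_cbox_shift_eq_integral_UNIV[symmetric, OF zero]) auto
  qed auto
  with has_field_derivative_integral_translate[OF deriv cont]
  have "integral (cbox (- c) c) (\<lambda>x. DF x u) = 0"
    by (rule DERIV_unique)
  moreover have "((\<lambda>x. DF x u) has_integral integral (cbox (- c) c) (\<lambda>x. DF x u)) (cbox (- c) c)"
    by (intro integrable_integral integrable_continuous continuous_on_subset[OF cont]) auto
  ultimately show ?thesis
    using shift[of _ 0] DF_zero by (auto intro: has_integral_on_superset)
qed

lemma open_subset_slab_interior: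
  fixes u :: "'a::euclidean_space"
  assumes "open \<Omega>" "u \<noteq> 0" "\<Omega> \<subseteq> {x. a \<le> u \<bullet> x \<and> u \<bullet> x \<le> b}"
  shows "\<Omega> \<subseteq> {x. a < u \<bullet> x \<and> u \<bullet> x < b}"
proof -
  have "\<Omega> \<subseteq> interior ({x. a \<le> u \<bullet> x} \<inter> {x. u \<bullet> x \<le> b})"
    using assms by (intro interior_maximal) auto
  also have "\<dots> = {x. a < u \<bullet> x \<and> u \<bullet> x < b}"
    using assms(2) by (auto simp: interior_Int)
  finally show ?thesis .
qed

lemma has_derivative_abs_powr_comp:
  fixes f :: "'a::real_normed_vector \<Rightarrow> real"
  assumes "(f has_derivative f') (at x)" "p > 1"
  shows "((\<lambda>x. \<bar>f x\<bar> powr p) has_derivative (\<lambda>h. p * \<bar>f x\<bar> powr (p - 1) * sgn (f x) * f' h)) (at x)"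
  using has_derivative_compose[OF assms(1)
      has_field_derivative_imp_has_derivative[OF has_real_derivative_abs_powr[OF assms(2)]]]
  by (simp add: mult.commute)

lemma test_fun_abs_powr:
  fixes \<phi> :: "'a::euclidean_space \<Rightarrow> real"
  assumes tf: "test_fun \<Omega> \<phi> G" and p: "p > 1"
  shows "\<And>x. ((\<lambda>x. \<bar>\<phi> x\<bar> powr p) has_derivative
              (\<lambda>h. p * \<bar>\<phi> x\<bar> powr (p - 1) * sgn (\<phi> x) * (G x \<bullet> h))) (at x)"
    and "continuous_on UNIV (\<lambda>x. \<bar>\<phi> x\<bar> powr p)"
    and "continuous_on UNIV (\<lambda>x. p * \<bar>\<phi> x\<bar> powr (p - 1) * sgn (\<phi> x) * (G x \<bullet> u))"
proof -
  note \<phi> = test_funD[OF tf]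
  show "((\<lambda>x. \<bar>\<phi> x\<bar> powr p) has_derivative
          (\<lambda>h. p * \<bar>\<phi> x\<bar> powr (p - 1) * sgn (\<phi> x) * (G x \<bullet> h))) (at x)" for x
    by (rule has_derivative_abs_powr_comp[OF \<phi>(1) p])
  show "continuous_on UNIV (\<lambda>x. \<bar>\<phi> x\<bar> powr p)"
    using p by (intro continuous_on_powr' continuous_intros \<phi>(6)) auto
  have "continuous_on UNIV (\<lambda>x. \<bar>\<phi> x\<bar> powr (p - 1) * sgn (\<phi> x))"
    using continuous_on_compose2[OF continuous_on_abs_powr_sgn \<phi>(6), of "p - 1"] p by simp
  then have "continuous_on UNIV (\<lambda>x. p * (\<bar>\<phi> x\<bar> powr (p - 1) * sgn (\<phi> x)) * (G x \<bullet> u))"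
    by (intro continuous_on_mult[OF continuous_on_mult[OF continuous_on_const]]
        continuous_on_inner \<phi>(7) continuous_on_const)
  then show "continuous_on UNIV (\<lambda>x. p * \<bar>\<phi> x\<bar> powr (p - 1) * sgn (\<phi> x) * (G x \<bullet> u))"
    by (simp add: mult.assoc)
qed

lemma barrier_comp_has_derivative:
  fixes u :: "'a::real_inner"
  assumes p: "p > 1" and x: "\<bar>u \<bullet> x - m\<bar> < R"
  shows "((\<lambda>y. barrier p R (u \<bullet> y - m)) has_derivative
           (\<lambda>h. barrier_deriv p R (u \<bullet> x - m) * (u \<bullet> h))) (at x)"
proof -
  have "((\<lambda>y. u \<bullet> y - m) has_derivative (\<lambda>h. u \<bullet> h)) (at x)"
    by (auto intro!: derivative_eq_intros)
  from has_derivative_compose[OF this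
      has_field_derivative_imp_has_derivative[OF barrier_has_real_derivative[OF p x]]]
  show ?thesis .
qed

lemma continuous_on_barrier_comp:
  fixes u :: "'a::real_inner"
  assumes p: "p > 1"
  shows "continuous_on {x. \<bar>u \<bullet> x - m\<bar> < R} (\<lambda>x. barrier p R (u \<bullet> x - m))"
    and "continuous_on {x. \<bar>u \<bullet> x - m\<bar> < R} (\<lambda>x. barrier_deriv p R (u \<bullet> x - m))"
  by (rule continuous_on_compose2[OF continuous_on_barrier[OF p]]
      continuous_on_compose2[OF continuous_on_barrier_deriv[OF p]];
      auto simp: abs_less_iff intro!: continuous_intros)+

lemma test_fun_barrier_divergence:
  fixes \<phi> :: "'a::euclidean_space \<Rightarrow> real" and u :: 'a
  assumes p: "p > 1" and tf: "test_fun \<Omega> \<phi> G" and u: "norm u = 1"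
    and supp: "closure {x. \<phi> x \<noteq> 0} \<subseteq> {x. \<bar>u \<bullet> x - m\<bar> < R}"
  shows "((\<lambda>x. barrier_deriv p R (u \<bullet> x - m) * \<bar>\<phi> x\<bar> powr p
              + barrier p R (u \<bullet> x - m) * (p * \<bar>\<phi> x\<bar> powr (p - 1) * sgn (\<phi> x) * (G x \<bullet> u)))
           has_integral 0) UNIV"
proof -
  define S where "S = closure {x. \<phi> x \<noteq> 0}"
  define U where "U = {x. \<bar>u \<bullet> x - m\<bar> < R}"
  define F where "F x = barrier p R (u \<bullet> x - m) * \<bar>\<phi> x\<bar> powr p" for x
  define DF where "DF x h =
    barrier p R (u \<bullet> x - m) * (p * \<bar>\<phi> x\<bar> powr (p - 1) * sgn (\<phi> x) * (G x \<bullet> h))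
    + barrier_deriv p R (u \<bullet> x - m) * (u \<bullet> h) * \<bar>\<phi> x\<bar> powr p" for x h
  note \<phi> = test_funD[OF tf, folded S_def]
  note \<psi> = test_fun_abs_powr[OF tf p]
  have "open U"
    unfolding U_def by (intro open_Collect_less continuous_intros)
  have "closed S" "S \<subseteq> U"
    using supp by (simp_all add: S_def U_def)
  have F_zero: "F x = 0" and DF_zero: "DF x = (\<lambda>h. 0)" if "x \<notin> S" for x
    using \<phi>(4)[OF that] p by (simp_all add: F_def DF_def fun_eq_iff)
  have F_deriv: "(F has_derivative DF x) (at x)" for x
  proof (cases "x \<in> U")
    case True
    then have "\<bar>u \<bullet> x - m\<bar> < R"
      by (simp add: U_def)
    from has_derivative_mult[OF barrier_comp_has_derivative[OF p this] \<psi>(1)] show ?thesis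
      unfolding F_def[abs_def] DF_def
      by (rule has_derivative_eq_rhs) (simp add: fun_eq_iff algebra_simps)
  next
    case False
    then have "x \<in> - S"
      using \<open>S \<subseteq> U\<close> by auto
    have "(F has_derivative (\<lambda>h. 0)) (at x)"
      by (rule has_derivative_transform_within_open[OF has_derivative_const _ \<open>x \<in> - S\<close>])
        (use \<open>closed S\<close> F_zero in auto)
    then show ?thesis
      using DF_zero \<open>x \<in> - S\<close> by simp
  qed
  have "continuous_on U (\<lambda>x. DF x u)"
    unfolding DF_def U_def
    by (intro continuous_on_add continuous_on_mult[OF continuous_on_barrier_comp(1)[OF p]]
        continuous_on_mult[OF continuous_on_mult[OF continuous_on_barrier_comp(2)[OF p]
          continuous_on_const]]
        continuous_on_subset[OF \<psi>(2)] continuous_on_subset[OF \<psi>(3)] subset_UNIV)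
  then have "continuous_on UNIV (\<lambda>x. DF x u)"
    by (rule continuous_on_UNIV_zero_outside[OF _ \<open>open U\<close> \<open>closed S\<close> \<open>S \<subseteq> U\<close>]) (simp add: DF_zero)
  from has_integral_directional_derivative_eq_0[OF F_deriv this \<phi>(2) F_zero]
  show ?thesis
    using u by (simp add: DF_def power2_norm_eq_inner[symmetric] add.commute mult.commute)
qed

lemma nn_set_integral_cmult_le_of_pointwise:
  fixes f g D :: "'a::euclidean_space \<Rightarrow> real"
  assumes f: "f integrable_on UNIV" "\<And>x. f x \<ge> 0" "\<And>x. x \<notin> \<Omega> \<Longrightarrow> f x = 0"
    and g: "g integrable_on UNIV" "\<And>x. g x \<ge> 0" "\<And>x. x \<notin> \<Omega> \<Longrightarrow> g x = 0"
    and D: "(D has_integral 0) UNIV"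
    and le: "\<And>x. C * f x \<le> g x + D x"
  shows "ennreal C * (\<integral>\<^sup>+ x\<in>\<Omega>. ennreal (f x) \<partial>lebesgue) \<le> (\<integral>\<^sup>+ x\<in>\<Omega>. ennreal (g x) \<partial>lebesgue)"
proof -
  have "(\<lambda>x. C * f x) integrable_on UNIV"
    using integrable_on_cmult_left[OF f(1), of C] by simp
  from integral_le[OF this integrable_add[OF g(1) has_integral_integrable[OF D]] le]
  have "C * integral UNIV f \<le> integral UNIV g"
    using integral_add[OF g(1) has_integral_integrable[OF D]] integral_unique[OF D] by simp
  moreover have "integral UNIV f \<ge> 0"
    using f by (intro integral_nonneg) auto
  ultimately show ?thesis
    using f g
    by (cases "C \<ge> 0")
      (simp_all add: nn_set_integral_eq_integral ennreal_mult[symmetric] ennreal_leI ennreal_neg)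
qed

lemma test_fun_slab_inequality:
  fixes \<Omega> :: "'a::euclidean_space set" and \<phi> :: "'a \<Rightarrow> real"
  assumes p: "p > 1" and \<Omega>: "open \<Omega>" and u: "norm u = 1"
    and slab: "\<Omega> \<subseteq> {x. a \<le> u \<bullet> x \<and> u \<bullet> x \<le> b}" and tf: "test_fun \<Omega> \<phi> G"
  shows "(\<integral>\<^sup>+ x\<in>\<Omega>. ennreal (\<bar>\<phi> x\<bar> powr p) \<partial>lebesgue) < \<infinity>"
    and "ennreal ((p / (p - 1)) powr (p - 1) * ((b - a) / 2) powr (- p))
           * (\<integral>\<^sup>+ x\<in>\<Omega>. ennreal (\<bar>\<phi> x\<bar> powr p) \<partial>lebesgue)
         \<le> (\<integral>\<^sup>+ x\<in>\<Omega>. ennreal (norm (G x) powr p) \<partial>lebesgue)"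
proof -
  define S where "S = closure {x. \<phi> x \<noteq> 0}"
  define m where "m = (a + b) / 2"
  define R where "R = (b - a) / 2"
  note \<phi> = test_funD[OF tf, folded S_def]
  have \<psi>_int: "(\<lambda>x. \<bar>\<phi> x\<bar> powr p) integrable_on UNIV"
    using p by (intro integrable_on_UNIV_compact_support[OF test_fun_abs_powr(2)[OF tf p] \<phi>(2)])
      (simp add: \<phi>(4))
  show "(\<integral>\<^sup>+ x\<in>\<Omega>. ennreal (\<bar>\<phi> x\<bar> powr p) \<partial>lebesgue) < \<infinity>"
    using \<psi>_int \<phi>(3,4) p by (subst nn_set_integral_eq_integral) auto
  have G_int: "(\<lambda>x. norm (G x) powr p) integrable_on UNIV"
    using p by (intro integrable_on_UNIV_compact_support[OF _ \<phi>(2)] continuous_on_powr'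
        continuous_intros \<phi>(7)) (auto simp: \<phi>(5))
  have "u \<noteq> 0"
    using u by auto
  then have "S \<subseteq> {x. a < u \<bullet> x \<and> u \<bullet> x < b}"
    using open_subset_slab_interior[OF \<Omega> _ slab] \<phi>(3) by blast
  then have supp: "S \<subseteq> {x. \<bar>u \<bullet> x - m\<bar> < R}"
    unfolding m_def R_def abs_less_iff by (auto dest!: subsetD simp: field_simps)
  have pointwise: "(p / (p - 1)) powr (p - 1) * R powr (- p) * \<bar>\<phi> x\<bar> powr p
      \<le> norm (G x) powr p + (barrier_deriv p R (u \<bullet> x - m) * \<bar>\<phi> x\<bar> powr p
        + barrier p R (u \<bullet> x - m) * (p * \<bar>\<phi> x\<bar> powr (p - 1) * sgn (\<phi> x) * (G x \<bullet> u)))" for x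
  proof (cases "\<phi> x = 0")
    case False
    then have "x \<in> S"
      unfolding S_def by (meson closure_subset mem_Collect_eq subsetD)
    then have "\<bar>u \<bullet> x - m\<bar> < R"
      using supp by blast
    moreover have "\<bar>G x \<bullet> u\<bar> \<le> norm (G x)"
      using Cauchy_Schwarz_ineq2[of "G x" u] u by simp
    ultimately show ?thesis
      using barrier_young_inequality[OF p] by (simp only: add.assoc)
  qed simp
  show "ennreal ((p / (p - 1)) powr (p - 1) * ((b - a) / 2) powr (- p))
           * (\<integral>\<^sup>+ x\<in>\<Omega>. ennreal (\<bar>\<phi> x\<bar> powr p) \<partial>lebesgue)
         \<le> (\<integral>\<^sup>+ x\<in>\<Omega>. ennreal (norm (G x) powr p) \<partial>lebesgue)"
    unfolding R_def[symmetric] using \<phi>(3-5) p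
    by (intro nn_set_integral_cmult_le_of_pointwise[OF \<psi>_int _ _ G_int _ _
          test_fun_barrier_divergence[OF p tf u supp[unfolded S_def]] pointwise]) auto
qed


section \<open>Approximation in \<open>L\<^sup>p\<close>\<close>

lemma nn_set_integral_powr_split:
  fixes g :: "'a \<Rightarrow> 'b::real_normed_vector" and h :: "'a \<Rightarrow> 'c::real_normed_vector"
  assumes p: "p \<ge> 1" and l: "0 < l" "l < 1"
    and le: "\<And>x. norm (f x) \<le> norm (g x) + norm (h x)"
    and [measurable]: "g \<in> borel_measurable M" "h \<in> borel_measurable M" "\<Omega> \<in> sets M"
  shows "(\<integral>\<^sup>+ x\<in>\<Omega>. ennreal (norm (f x) powr p) \<partial>M)
           \<le> ennreal (l powr (1 - p)) * (\<integral>\<^sup>+ x\<in>\<Omega>. ennreal (norm (g x) powr p) \<partial>M)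
             + ennreal ((1 - l) powr (1 - p)) * (\<integral>\<^sup>+ x\<in>\<Omega>. ennreal (norm (h x) powr p) \<partial>M)"
proof -
  define c1 where "c1 = ennreal (l powr (1 - p))"
  define c2 where "c2 = ennreal ((1 - l) powr (1 - p))"
  have pointwise: "ennreal (norm (f x) powr p)
      \<le> c1 * ennreal (norm (g x) powr p) + c2 * ennreal (norm (h x) powr p)" for x
  proof -
    have "norm (f x) powr p \<le> (norm (g x) + norm (h x)) powr p"
      using le p by (intro powr_mono2) auto
    also have "\<dots> \<le> l powr (1 - p) * norm (g x) powr p + (1 - l) powr (1 - p) * norm (h x) powr p"
      by (rule add_powr_le_weighted[OF p l]) auto
    finally show ?thesis
      by (simp add: c1_def c2_def ennreal_mult'[symmetric] ennreal_plus[symmetric] ennreal_leI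
          del: ennreal_plus)
  qed
  have cmult: "(\<integral>\<^sup>+ x\<in>\<Omega>. c * k x \<partial>M) = c * (\<integral>\<^sup>+ x\<in>\<Omega>. k x \<partial>M)"
    if [measurable]: "k \<in> borel_measurable M" for c and k :: "'a \<Rightarrow> ennreal"
    by (subst nn_integral_cmult[symmetric]) (simp_all add: mult.assoc)
  have "(\<integral>\<^sup>+ x\<in>\<Omega>. ennreal (norm (f x) powr p) \<partial>M)
      \<le> (\<integral>\<^sup>+ x\<in>\<Omega>. c1 * ennreal (norm (g x) powr p) + c2 * ennreal (norm (h x) powr p) \<partial>M)"
    by (intro nn_integral_mono mult_right_mono pointwise) simp
  also have "\<dots> = (\<integral>\<^sup>+ x\<in>\<Omega>. c1 * ennreal (norm (g x) powr p) \<partial>M)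
      + (\<integral>\<^sup>+ x\<in>\<Omega>. c2 * ennreal (norm (h x) powr p) \<partial>M)"
    by (rule nn_set_integral_add) measurable
  finally show ?thesis
    by (simp add: cmult c1_def c2_def)
qed

lemma nn_set_integral_powr_finite_limit:
  fixes \<phi> :: "nat \<Rightarrow> 'a \<Rightarrow> 'b::{real_normed_vector, second_countable_topology}" and v :: "'a \<Rightarrow> 'b"
  assumes p: "p \<ge> 1"
    and [measurable]: "\<And>k. \<phi> k \<in> borel_measurable M" "v \<in> borel_measurable M" "\<Omega> \<in> sets M"
    and fin: "\<And>k. (\<integral>\<^sup>+ x\<in>\<Omega>. ennreal (norm (\<phi> k x) powr p) \<partial>M) < \<infinity>"
    and lim: "(\<lambda>k. \<integral>\<^sup>+ x\<in>\<Omega>. ennreal (norm (\<phi> k x - v x) powr p) \<partial>M) \<longlonglongrightarrow> 0"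
  shows "(\<integral>\<^sup>+ x\<in>\<Omega>. ennreal (norm (v x) powr p) \<partial>M) < \<infinity>"
proof -
  obtain k where k: "(\<integral>\<^sup>+ x\<in>\<Omega>. ennreal (norm (\<phi> k x - v x) powr p) \<partial>M) < 1"
    using order_tendstoD(2)[OF lim, of 1] by (auto simp: eventually_sequentially)
  have tri: "norm (v x) \<le> norm (\<phi> k x) + norm (\<phi> k x - v x)" for x
    using norm_triangle_sub[of "v x" "\<phi> k x"] by (simp only: norm_minus_commute[of "v x"])
  have "(\<integral>\<^sup>+ x\<in>\<Omega>. ennreal (norm (v x) powr p) \<partial>M)
      \<le> ennreal ((1 / 2) powr (1 - p)) * (\<integral>\<^sup>+ x\<in>\<Omega>. ennreal (norm (\<phi> k x) powr p) \<partial>M)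
        + ennreal ((1 - 1 / 2) powr (1 - p)) * (\<integral>\<^sup>+ x\<in>\<Omega>. ennreal (norm (\<phi> k x - v x) powr p) \<partial>M)"
    by (rule nn_set_integral_powr_split[OF p _ _ tri]) (simp_all add: borel_measurable_diff)
  also have "\<dots> < \<infinity>"
  proof -
    have "(\<integral>\<^sup>+ x\<in>\<Omega>. ennreal (norm (\<phi> k x - v x) powr p) \<partial>M) < \<infinity>"
      using order.strict_trans[OF k ennreal_one_less_top] by simp
    then show ?thesis
      using fin[of k] by (simp add: ennreal_mult_less_top)
  qed
  finally show ?thesis .
qed

lemma ennreal_le_of_weighted_bounds:
  fixes X W :: ennreal
  assumes "\<And>l. 0 < l \<Longrightarrow> l < 1 \<Longrightarrow> X \<le> ennreal (l powr (1 - p)) * ennreal (l powr (1 - p)) * W"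
  shows "X \<le> W"
proof (cases "W = \<infinity>")
  case False
  have "((\<lambda>l. ennreal (l powr (1 - p)) * ennreal (l powr (1 - p)) * W)
      \<longlongrightarrow> ennreal (1 powr (1 - p)) * ennreal (1 powr (1 - p)) * W) (at_left 1)"
    using False by (intro tendsto_intros) (auto simp: top.not_eq_extremum)
  moreover have "\<forall>\<^sub>F l in at_left 1. X \<le> ennreal (l powr (1 - p)) * ennreal (l powr (1 - p)) * W"
    by (rule eventually_mono[OF eventually_at_left_real[OF zero_less_one]]) (auto intro: assms)
  ultimately have "X \<le> ennreal (1 powr (1 - p)) * ennreal (1 powr (1 - p)) * W"
    by (rule tendsto_lowerbound) simp
  then show ?thesis
    by simp
qed simp

lemma nn_set_integral_powr_le_limit:
  fixes \<phi> :: "nat \<Rightarrow> 'a \<Rightarrow> 'b::{real_normed_vector, second_countable_topology}" and v :: "'a \<Rightarrow> 'b"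
    and \<psi> :: "nat \<Rightarrow> 'a \<Rightarrow> 'c::{real_normed_vector, second_countable_topology}" and g :: "'a \<Rightarrow> 'c"
  assumes p: "p \<ge> 1"
    and [measurable]: "\<And>k. \<phi> k \<in> borel_measurable M" "\<And>k. \<psi> k \<in> borel_measurable M"
      "v \<in> borel_measurable M" "g \<in> borel_measurable M" "\<Omega> \<in> sets M"
    and le: "\<And>k. ennreal C * (\<integral>\<^sup>+ x\<in>\<Omega>. ennreal (norm (\<phi> k x) powr p) \<partial>M)
                  \<le> (\<integral>\<^sup>+ x\<in>\<Omega>. ennreal (norm (\<psi> k x) powr p) \<partial>M)"
    and lim_\<phi>: "(\<lambda>k. \<integral>\<^sup>+ x\<in>\<Omega>. ennreal (norm (\<phi> k x - v x) powr p) \<partial>M) \<longlonglongrightarrow> 0"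
    and lim_\<psi>: "(\<lambda>k. \<integral>\<^sup>+ x\<in>\<Omega>. ennreal (norm (\<psi> k x - g x) powr p) \<partial>M) \<longlonglongrightarrow> 0"
  shows "ennreal C * (\<integral>\<^sup>+ x\<in>\<Omega>. ennreal (norm (v x) powr p) \<partial>M)
           \<le> (\<integral>\<^sup>+ x\<in>\<Omega>. ennreal (norm (g x) powr p) \<partial>M)"
proof -
  define V where "V = (\<integral>\<^sup>+ x\<in>\<Omega>. ennreal (norm (v x) powr p) \<partial>M)"
  define W where "W = (\<integral>\<^sup>+ x\<in>\<Omega>. ennreal (norm (g x) powr p) \<partial>M)"
  define \<delta> where "\<delta> k = (\<integral>\<^sup>+ x\<in>\<Omega>. ennreal (norm (\<phi> k x - v x) powr p) \<partial>M)" for k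
  define \<eta> where "\<eta> k = (\<integral>\<^sup>+ x\<in>\<Omega>. ennreal (norm (\<psi> k x - g x) powr p) \<partial>M)" for k
  \<comment> \<open>\<open>add_powr_le_weighted\<close> replaces Minkowski's inequality; the factor
      \<open>l powr (1 - p)\<close> it costs tends to \<open>1\<close> as \<open>l \<rightarrow> 1\<close>.\<close>
  have bound: "ennreal C * V \<le> ennreal (l powr (1 - p)) * ennreal (l powr (1 - p)) * W"
    if l: "0 < l" "l < 1" for l
  proof -
    define e1 where "e1 = ennreal (l powr (1 - p))"
    define e2 where "e2 = ennreal ((1 - l) powr (1 - p))"
    have "ennreal C * V \<le> e1 * (e1 * W + e2 * \<eta> k) + ennreal C * e2 * \<delta> k" for k
    proof -
      have tri_v: "norm (v x) \<le> norm (\<phi> k x) + norm (\<phi> k x - v x)" for x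
        using norm_triangle_sub[of "v x" "\<phi> k x"] by (simp only: norm_minus_commute[of "v x"])
      have tri_\<psi>: "norm (\<psi> k x) \<le> norm (g x) + norm (\<psi> k x - g x)" for x
        by (rule norm_triangle_sub)
      have "ennreal C * V
          \<le> ennreal C * (e1 * (\<integral>\<^sup>+ x\<in>\<Omega>. ennreal (norm (\<phi> k x) powr p) \<partial>M) + e2 * \<delta> k)"
        unfolding V_def e1_def e2_def \<delta>_def
        by (intro mult_left_mono nn_set_integral_powr_split[OF p l tri_v])
          (simp_all add: borel_measurable_diff)
      also have "\<dots> = e1 * (ennreal C * (\<integral>\<^sup>+ x\<in>\<Omega>. ennreal (norm (\<phi> k x) powr p) \<partial>M))
          + ennreal C * e2 * \<delta> k"
        by (simp add: algebra_simps)
      also have "\<dots> \<le> e1 * (\<integral>\<^sup>+ x\<in>\<Omega>. ennreal (norm (\<psi> k x) powr p) \<partial>M) + ennreal C * e2 * \<delta> k"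
        by (intro add_right_mono mult_left_mono le) simp
      also have "\<dots> \<le> e1 * (e1 * W + e2 * \<eta> k) + ennreal C * e2 * \<delta> k"
        unfolding W_def e1_def e2_def \<eta>_def
        by (intro add_right_mono mult_left_mono nn_set_integral_powr_split[OF p l tri_\<psi>])
          (simp_all add: borel_measurable_diff)
      finally show ?thesis .
    qed
    moreover have "(\<lambda>k. e1 * (e1 * W + e2 * \<eta> k) + ennreal C * e2 * \<delta> k)
        \<longlonglongrightarrow> e1 * (e1 * W + e2 * 0) + ennreal C * e2 * 0"
      unfolding \<delta>_def \<eta>_def
      by (intro tendsto_add ennreal_tendsto_cmult tendsto_const lim_\<phi> lim_\<psi>)
        (simp_all add: e1_def e2_def ennreal_mult_less_top)
    ultimately have "ennreal C * V \<le> e1 * (e1 * W + e2 * 0) + ennreal C * e2 * 0"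
      by (intro LIMSEQ_le_const) auto
    then show ?thesis
      by (simp add: e1_def mult.assoc)
  qed
  show ?thesis
    unfolding V_def[symmetric] W_def[symmetric] by (rule ennreal_le_of_weighted_bounds[OF bound])
qed

lemma W0_slab_inequality:
  fixes \<Omega> :: "'a::euclidean_space set"
  assumes p: "p > 1" and \<Omega>: "open \<Omega>" and u: "norm u = 1"
    and slab: "\<Omega> \<subseteq> {x. a \<le> u \<bullet> x \<and> u \<bullet> x \<le> b}" and vg: "(v, g) \<in> W0 p \<Omega>"
  shows "(\<integral>\<^sup>+ x\<in>\<Omega>. ennreal (\<bar>v x\<bar> powr p) \<partial>lebesgue) < \<infinity>"
    and "ennreal ((p / (p - 1)) powr (p - 1) * ((b - a) / 2) powr (- p))
           * (\<integral>\<^sup>+ x\<in>\<Omega>. ennreal (\<bar>v x\<bar> powr p) \<partial>lebesgue)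
         \<le> (\<integral>\<^sup>+ x\<in>\<Omega>. ennreal (norm (g x) powr p) \<partial>lebesgue)"
proof -
  obtain \<phi> G where [measurable]: "v \<in> borel_measurable lebesgue" "g \<in> borel_measurable lebesgue"
    and tf: "\<And>k. test_fun \<Omega> (\<phi> k) (G k)"
    and lim_\<phi>: "(\<lambda>k. \<integral>\<^sup>+ x\<in>\<Omega>. ennreal (\<bar>\<phi> k x - v x\<bar> powr p) \<partial>lebesgue) \<longlonglongrightarrow> 0"
    and lim_G: "(\<lambda>k. \<integral>\<^sup>+ x\<in>\<Omega>. ennreal (norm (G k x - g x) powr p) \<partial>lebesgue) \<longlonglongrightarrow> 0"
    using vg unfolding W0_def by blast
  have [measurable]: "\<phi> k \<in> borel_measurable lebesgue" "G k \<in> borel_measurable lebesgue" for k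
    using test_funD(6,7)[OF tf[of k]] by (simp_all add: borel_measurable_lebesgue_continuous)
  have [measurable]: "\<Omega> \<in> sets lebesgue"
    using \<Omega> by simp
  note test_ineq = test_fun_slab_inequality[OF p \<Omega> u slab tf]
  show "(\<integral>\<^sup>+ x\<in>\<Omega>. ennreal (\<bar>v x\<bar> powr p) \<partial>lebesgue) < \<infinity>"
    using nn_set_integral_powr_finite_limit[of p \<phi> lebesgue v \<Omega>] p test_ineq(1) lim_\<phi> by simp
  show "ennreal ((p / (p - 1)) powr (p - 1) * ((b - a) / 2) powr (- p))
           * (\<integral>\<^sup>+ x\<in>\<Omega>. ennreal (\<bar>v x\<bar> powr p) \<partial>lebesgue)
         \<le> (\<integral>\<^sup>+ x\<in>\<Omega>. ennreal (norm (g x) powr p) \<partial>lebesgue)"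
    using nn_set_integral_powr_le_limit[of p \<phi> lebesgue G v g \<Omega>] p test_ineq(2) lim_\<phi> lim_G by simp
qed


section \<open>Slab widths\<close>

lemma bounded_subset_slab:
  fixes u :: "'a::real_inner"
  assumes "bounded \<Omega>"
  obtains a b where "\<Omega> \<subseteq> {x. a \<le> u \<bullet> x \<and> u \<bullet> x \<le> b}"
proof -
  obtain M where M: "\<And>x. x \<in> \<Omega> \<Longrightarrow> norm x \<le> M"
    using assms bounded_iff by blast
  have "- (norm u * M) \<le> u \<bullet> x \<and> u \<bullet> x \<le> norm u * M" if "x \<in> \<Omega>" for x
    using Cauchy_Schwarz_ineq2[of u x] mult_left_mono[OF M[OF that] norm_ge_zero, of u]
    by arith
  then show ?thesis
    by (intro that[of "- (norm u * M)" "norm u * M"]) blast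
qed

definition slab_widths :: "'a::euclidean_space set \<Rightarrow> real set" where
  "slab_widths \<Omega> = {b - a | u a b. norm u = 1 \<and> \<Omega> \<subseteq> {x. a \<le> u \<bullet> x \<and> u \<bullet> x \<le> b}}"

lemma slab_diameter_eq_Inf_slab_widths: "slab_diameter \<Omega> = Inf (slab_widths \<Omega>)"
  by (simp add: slab_diameter_def slab_widths_def)

lemma slab_widths_nonempty:
  assumes "bounded \<Omega>"
  shows "slab_widths \<Omega> \<noteq> {}"
proof -
  obtain u :: 'a where "norm u = 1"
    using norm_Basis nonempty_Basis by blast
  moreover obtain a b where "\<Omega> \<subseteq> {x. a \<le> u \<bullet> x \<and> u \<bullet> x \<le> b}"
    using bounded_subset_slab[OF assms] by blast
  ultimately show ?thesis
    by (auto simp: slab_widths_def)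
qed

lemma slab_widths_ge_ball_diameter:
  assumes ball: "cball x r \<subseteq> \<Omega>" and r: "r \<ge> 0" and e: "e \<in> slab_widths \<Omega>"
  shows "2 * r \<le> e"
proof -
  obtain u a b where u: "norm u = 1" and slab: "\<Omega> \<subseteq> {y. a \<le> u \<bullet> y \<and> u \<bullet> y \<le> b}"
    and e: "e = b - a"
    using e by (auto simp: slab_widths_def)
  have "x + r *\<^sub>R u \<in> \<Omega>" "x - r *\<^sub>R u \<in> \<Omega>"
    using ball r u by (auto simp: dist_norm)
  then have "u \<bullet> (x + r *\<^sub>R u) \<le> b" "a \<le> u \<bullet> (x - r *\<^sub>R u)"
    using slab by auto
  moreover have "u \<bullet> u = 1"
    using u by (simp add: power2_norm_eq_inner[symmetric])
  ultimately show ?thesis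
    by (simp add: e inner_add_right inner_diff_right)
qed

lemma slab_widths_pos:
  assumes "open \<Omega>" "\<Omega> \<noteq> {}"
  shows "slab_widths \<Omega> \<subseteq> {0<..}"
proof -
  obtain x r where r: "r > 0" "cball x r \<subseteq> \<Omega>"
    using assms open_contains_cball by blast
  show ?thesis
  proof
    fix e
    assume "e \<in> slab_widths \<Omega>"
    with r have "2 * r \<le> e"
      by (intro slab_widths_ge_ball_diameter) auto
    then show "e \<in> {0<..}"
      using r(1) by simp
  qed
qed

lemma slab_diameter_pos:
  assumes "open \<Omega>" "bounded \<Omega>" "\<Omega> \<noteq> {}"
  shows "slab_diameter \<Omega> > 0"
proof -
  obtain x r where r: "r > 0" "cball x r \<subseteq> \<Omega>"
    using assms open_contains_cball by blast
  then have "2 * r \<le> Inf (slab_widths \<Omega>)"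
    by (intro cInf_greatest slab_widths_nonempty[OF assms(2)] slab_widths_ge_ball_diameter) auto
  then show ?thesis
    using r(1) by (simp add: slab_diameter_eq_Inf_slab_widths)
qed

lemma W0_slab_widths_inequality:
  fixes \<Omega> :: "'a::euclidean_space set"
  assumes p: "p > 1" and \<Omega>: "open \<Omega>" and e: "e \<in> slab_widths \<Omega>" "e > 0"
    and vg: "(v, g) \<in> W0 p \<Omega>"
  shows "ennreal ((p / (p - 1)) powr (p - 1) * (2 / e) powr p)
           * (\<integral>\<^sup>+ x\<in>\<Omega>. ennreal (\<bar>v x\<bar> powr p) \<partial>lebesgue)
         \<le> (\<integral>\<^sup>+ x\<in>\<Omega>. ennreal (norm (g x) powr p) \<partial>lebesgue)"
proof -
  obtain u a b where u: "norm u = 1" and slab: "\<Omega> \<subseteq> {x. a \<le> u \<bullet> x \<and> u \<bullet> x \<le> b}"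
    and e_eq: "e = b - a"
    using e(1) by (auto simp: slab_widths_def)
  have "((b - a) / 2) powr (- p) = (2 / e) powr p"
    using e(2) by (simp add: e_eq powr_minus_divide powr_divide)
  then show ?thesis
    using W0_slab_inequality(2)[OF p \<Omega> u slab vg] by simp
qed

lemma antimono_bound_extends_to_Inf:
  fixes f :: "real \<Rightarrow> real" and S :: "real set"
  assumes S: "S \<noteq> {}" "S \<subseteq> {0<..}" and d: "Inf S \<le> d"
    and antimono: "\<And>x y. 0 < x \<Longrightarrow> x \<le> y \<Longrightarrow> f y \<le> f x"
    and cont: "continuous (at_right d) f"
    and bound: "\<And>e. e \<in> S \<Longrightarrow> f e \<le> c"
  shows "f d \<le> c"
proof (rule tendsto_upperbound)
  show "(f \<longlongrightarrow> f d) (at_right d)"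
    using cont by (simp add: continuous_within)
  show "\<forall>\<^sub>F w in at_right d. f w \<le> c"
  proof (rule eventually_at_rightI[of d "d + 1"])
    fix w
    assume "w \<in> {d<..<d + 1}"
    then obtain e where "e \<in> S" "e < w"
      using cInf_lessD[OF S(1), of w] d by auto
    then show "f w \<le> c"
      using antimono[of e w] bound[of e] S(2) by force
  qed simp
qed simp

lemma W0_slab_diameter_inequality:
  fixes \<Omega> :: "'a::euclidean_space set"
  assumes p: "p > 1" and \<Omega>: "open \<Omega>" "bounded \<Omega>" "\<Omega> \<noteq> {}"
    and d: "slab_diameter \<Omega> \<le> d" and vg: "(v, g) \<in> W0 p \<Omega>"
  shows "(\<integral>\<^sup>+ x\<in>\<Omega>. ennreal (\<bar>v x\<bar> powr p) \<partial>lebesgue) < \<infinity>"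
    and "ennreal ((p / (p - 1)) powr (p - 1) * (2 / d) powr p)
           * (\<integral>\<^sup>+ x\<in>\<Omega>. ennreal (\<bar>v x\<bar> powr p) \<partial>lebesgue)
         \<le> (\<integral>\<^sup>+ x\<in>\<Omega>. ennreal (norm (g x) powr p) \<partial>lebesgue)"
proof -
  define K where "K = (p / (p - 1)) powr (p - 1)"
  define V where "V = (\<integral>\<^sup>+ x\<in>\<Omega>. ennreal (\<bar>v x\<bar> powr p) \<partial>lebesgue)"
  define W where "W = (\<integral>\<^sup>+ x\<in>\<Omega>. ennreal (norm (g x) powr p) \<partial>lebesgue)"
  obtain u :: 'a where u: "norm u = 1"
    using norm_Basis nonempty_Basis by blast
  obtain a b where slab: "\<Omega> \<subseteq> {x. a \<le> u \<bullet> x \<and> u \<bullet> x \<le> b}"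
    using bounded_subset_slab[OF \<Omega>(2)] by blast
  show "V < \<infinity>"
    unfolding V_def by (rule W0_slab_inequality(1)[OF p \<Omega>(1) u slab vg])
  then obtain V' where V': "V = ennreal V'" "V' \<ge> 0"
    by (cases V) auto
  have "d > 0"
    using slab_diameter_pos[OF \<Omega>] d by simp
  show "ennreal (K * (2 / d) powr p) * V \<le> W"
  proof (cases "W = \<infinity>")
    case False
    then obtain W' where W': "W = ennreal W'" "W' \<ge> 0"
      by (cases W) auto
    have "K * (2 / d) powr p * V' \<le> W'"
    proof (rule antimono_bound_extends_to_Inf[where f = "\<lambda>w. K * (2 / w) powr p * V'" and d = d,
          OF slab_widths_nonempty[OF \<Omega>(2)] slab_widths_pos[OF \<Omega>(1,3)]])
      show "Inf (slab_widths \<Omega>) \<le> d"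
        using d by (simp add: slab_diameter_eq_Inf_slab_widths)
      show "K * (2 / y) powr p * V' \<le> K * (2 / x) powr p * V'" if "0 < x" "x \<le> y" for x y
      proof -
        have "(2 / y) powr p \<le> (2 / x) powr p"
          using that p by (intro powr_mono2 divide_left_mono) auto
        then show ?thesis
          using V' by (intro mult_right_mono mult_left_mono) (auto simp: K_def)
      qed
      show "continuous (at_right d) (\<lambda>w. K * (2 / w) powr p * V')"
        unfolding continuous_within using \<open>d > 0\<close> by (intro tendsto_intros) auto
      show "K * (2 / e) powr p * V' \<le> W'" if "e \<in> slab_widths \<Omega>" for e
      proof -
        have "e > 0"
          using that slab_widths_pos[OF \<Omega>(1,3)] by auto
        from W0_slab_widths_inequality[OF p \<Omega>(1) that this vg]
        have "ennreal (K * (2 / e) powr p * V') \<le> ennreal W'"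
          using V' W' by (simp add: K_def V_def W_def ennreal_mult)
        then show ?thesis
          using W' by (simp add: ennreal_le_iff)
      qed
    qed
    then show ?thesis
      using V' W' by (simp add: K_def ennreal_mult[symmetric])
  qed simp
qed

theorem corollary2p1:
  fixes \<Omega> :: "'a::euclidean_space set" and p d :: real
  assumes "p > 1"
    and "open \<Omega>" and "bounded \<Omega>" and "smooth_domain \<Omega>"
    and "slab_diameter \<Omega> \<le> d"
  shows "ennreal ((p / (p - 1)) powr (p - 1) * (2 / d) powr p) \<le> lambda1 p \<Omega>"
  unfolding lambda1_def
proof (rule Inf_greatest, safe)
  fix v g
  assume vg: "(v, g) \<in> W0 p \<Omega>" and nonzero: "(\<integral>\<^sup>+ x\<in>\<Omega>. ennreal (\<bar>v x\<bar> powr p) \<partial>lebesgue) \<noteq> 0"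
  then have "\<Omega> \<noteq> {}"
    by auto
  note bound = W0_slab_diameter_inequality[OF assms(1-3) this assms(5) vg]
  let ?C = "ennreal ((p / (p - 1)) powr (p - 1) * (2 / d) powr p)"
  let ?V = "\<integral>\<^sup>+ x\<in>\<Omega>. ennreal (\<bar>v x\<bar> powr p) \<partial>lebesgue"
  let ?W = "\<integral>\<^sup>+ x\<in>\<Omega>. ennreal (norm (g x) powr p) \<partial>lebesgue"
  have "?C = ?C * ?V / ?V"
    using nonzero bound(1) by (simp add: ennreal_mult_divide_eq)
  also have "\<dots> \<le> ?W / ?V"
    by (rule divide_right_mono_ennreal[OF bound(2)])
  finally show "?C \<le> ?W / ?V" .
qed

end
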